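(* Let $(\Theta,d)$ be a connected locally compact metric space and $(X,\mathcal{B},P)$ a probability space. Let $X_1,X_2,\dots$ be i.i.d. with law $P$ and $P_n:=n^{-1}\sum_{j=1}^n\delta_{X_j}$. Let $h:X\times\Theta\to\mathbb{R}$ be such that $h(\cdot,\theta)$ is measurable for each $\theta\in\Theta$. Assume: (i) $\theta\mapsto Ph(\theta):=\int h(x,\theta)\,dP(x)\in(-\infty,+\infty]$ is well defined and uniminimal on $\Theta$, with minimum at $\theta_0$; (ii) outside events $A_n$ with $\Pr(A_n)\to0$ as $n\to\infty$, the function $\theta\mapsto P_nh(\theta):=\int h(x,\theta)\,dP_n(x)$ is uniminimal on $\Theta$; (iii) for some neighborhood $U$ of $\theta_0$, $\{h(\cdot,\theta):\theta\in U\}$ is a Glivenko–Cantelli class for $P$. Then $\theta_0$ is a definite M-limit for $P$ with respect to $h$, i.e. for every neighborhood $U$ of $\theta_0$ there is $\varepsilon>0$ such that $$(P^n)^*\Big\{\inf\{P_nh(\theta):\theta\notin U\}\le\varepsilon+\inf\{P_nh(\phi):\phi\in U\}\Big\}\to0\quad(n\to\infty),$$ where $(P^n)^*$ denotes outer probability; and $\theta_0$ is the M-functional of $P$ for $h$, i.e. $Ph(\theta)$ is defined, satisfies $-\infty<Ph(\theta)\le+\infty$ for all $\theta$, and is minimized uniquely at $\theta=\theta_0$.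
   Context: A function $f:\Theta\to(-\infty,+\infty]$ is uniminimal iff it is lower semicontinuous, has a unique relative (local) minimum at some point, and for every $t\in\mathbb{R}$ the sublevel set $\{\theta: f(\theta)\le t\}$ is connected. A class $\mathcal{F}$ of $P$-integrable functions is a Glivenko–Cantelli class for $P$ if $\sup\{|\int f\,d(P_n-P)|: f\in\mathcal{F}\}\to0$ almost surely as $n\to\infty$ (the supremum being assumed measurable). *)

theory Defs
  imports "HOL-Probability.Probability"
begin

definition lsc_fun :: "('a::topological_space \<Rightarrow> ereal) \<Rightarrow> bool" where
  "lsc_fun f \<longleftrightarrow> (\<forall>t::ereal. closed {\<theta>. f \<theta> \<le> t})"

definition local_min_at :: "('a::topological_space \<Rightarrow> ereal) \<Rightarrow> 'a \<Rightarrow> bool" where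
  "local_min_at f x \<longleftrightarrow> (\<exists>V. open V \<and> x \<in> V \<and> (\<forall>y\<in>V. f x \<le> f y))"

definition uniminimal_at :: "('a::topological_space \<Rightarrow> ereal) \<Rightarrow> 'a \<Rightarrow> bool" where
  "uniminimal_at f x0 \<longleftrightarrow> lsc_fun f \<and> local_min_at f x0 \<and>
     (\<forall>y. local_min_at f y \<longrightarrow> y = x0) \<and>
     (\<forall>t::real. connected {\<theta>. f \<theta> \<le> ereal t})"

definition uniminimal :: "('a::topological_space \<Rightarrow> ereal) \<Rightarrow> bool" where
  "uniminimal f \<longleftrightarrow> (\<exists>x0. uniminimal_at f x0)"

definition nbhd :: "'a::topological_space set \<Rightarrow> 'a \<Rightarrow> bool" where
  "nbhd U x \<longleftrightarrow> (\<exists>V. open V \<and> x \<in> V \<and> V \<subseteq> U)"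

text \<open>Integral of a real function with values in (-infinity,+infinity]:
  well defined when the negative part has finite integral.\<close>
definition int_defined :: "'b measure \<Rightarrow> ('b \<Rightarrow> real) \<Rightarrow> bool" where
  "int_defined M f \<longleftrightarrow> (\<integral>\<^sup>+ x. ennreal (- f x) \<partial>M) < \<infinity>"

definition eint :: "'b measure \<Rightarrow> ('b \<Rightarrow> real) \<Rightarrow> ereal" where
  "eint M f = enn2ereal (\<integral>\<^sup>+ x. ennreal (f x) \<partial>M) - enn2ereal (\<integral>\<^sup>+ x. ennreal (- f x) \<partial>M)"

definition emp :: "nat \<Rightarrow> (nat \<Rightarrow> 'b) \<Rightarrow> ('b \<Rightarrow> real) \<Rightarrow> real" where
  "emp n x f = (\<Sum>j<n. f (x j)) / real n"

text \<open>Glivenko--Cantelli class for P, along the i.i.d. sequence given by the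
  coordinates of the infinite product space P^infinity; the suprema are assumed measurable.\<close>
definition glivenko_cantelli :: "'b measure \<Rightarrow> ('b \<Rightarrow> real) set \<Rightarrow> bool" where
  "glivenko_cantelli M F \<longleftrightarrow>
     (\<forall>f\<in>F. integrable M f) \<and>
     (\<forall>n. (\<lambda>\<omega>. SUP f\<in>F. ereal \<bar>emp n \<omega> f - integral\<^sup>L M f\<bar>)
            \<in> borel_measurable (PiM UNIV (\<lambda>_. M))) \<and>
     (AE \<omega> in PiM UNIV (\<lambda>_. M).
        (\<lambda>n. SUP f\<in>F. ereal \<bar>emp n \<omega> f - integral\<^sup>L M f\<bar>) \<longlonglongrightarrow> 0)"

definition outer_prob :: "'c measure \<Rightarrow> 'c set \<Rightarrow> real" where
  "outer_prob N A = Inf {measure N B | B. B \<in> sets N \<and> A \<subseteq> B}"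

end

theory Submission
  imports Defs
begin

(* Connected sublevel sets and a unique relative minimum make \<theta>0 the strict global minimum
   of Ph, so by lower semicontinuity Ph exceeds Ph(\<theta>0) by some 3\<eta> on the compact frontier
   of a small neighbourhood W of \<theta>0. With probability tending to one, P_n h is uniminimal and,
   by the Glivenko-Cantelli property, uniformly \<eta>-close to Ph near \<theta>0. Then a connected
   sublevel set of P_n h through \<theta>0 and a point outside U would cross the frontier of W,
   where P_n h is too large; so P_n h exceeds P_n h(\<theta>0) + \<eta> everywhere outside U. *)

lemma eint_eq_lebesgue_integral:
  assumes "integrable M g"
  shows "eint M g = ereal (integral\<^sup>L M g)"
proof -
  have fin: "(\<integral>\<^sup>+ x. ennreal (g x) \<partial>M) \<noteq> \<infinity>" "(\<integral>\<^sup>+ x. ennreal (- g x) \<partial>M) \<noteq> \<infinity>"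
    using assms by auto
  have "enn2ereal A = ereal (enn2real A)" if "A \<noteq> \<infinity>" for A :: ennreal
    using that by (cases A rule: ennreal_cases) auto
  with fin show ?thesis
    unfolding eint_def real_lebesgue_integral_def[OF assms] by simp
qed

lemma eint_gt_MInf:
  assumes "int_defined M g"
  shows "eint M g > - \<infinity>"
  using assms unfolding int_defined_def eint_def
  by (simp add: ereal_diff_eq_MInfty_iff less_ennreal.rep_eq)

lemma uniminimal_at_imp_strict_min:
  fixes f :: "'a::t1_space \<Rightarrow> ereal"
  assumes conn: "connected (UNIV :: 'a set)" and uni: "uniminimal_at f x0" and "\<theta> \<noteq> x0"
  shows "f x0 < f \<theta>"
proof (rule ccontr)
  assume "\<not> f x0 < f \<theta>"
  then have le: "f \<theta> \<le> f x0" by simp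
  from uni obtain V where V: "open V" "x0 \<in> V" "\<And>y. y \<in> V \<Longrightarrow> f x0 \<le> f y"
    unfolding uniminimal_at_def local_min_at_def by blast
  have uniq: "\<And>y. local_min_at f y \<Longrightarrow> y = x0"
    using uni unfolding uniminimal_at_def by blast
  define L where "L = {y. f y \<le> f x0}"
  have "connected L"
  proof (cases "f x0")
    case (real r)
    then show ?thesis using uni unfolding uniminimal_at_def L_def by simp
  next
    case PInf
    then show ?thesis using conn by (simp add: L_def)
  next
    case MInf
    then have "local_min_at f \<theta>"
      using le unfolding local_min_at_def by (intro exI[of _ UNIV]) auto
    then show ?thesis using uniq \<open>\<theta> \<noteq> x0\<close> by blast
  qed
  moreover have "x0 \<in> L" "\<theta> \<in> L" using le by (auto simp: L_def)
  ultimately obtain y where y: "y \<in> L" "y \<in> V" "y \<noteq> x0"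
    using V(1,2) \<open>\<theta> \<noteq> x0\<close> open_Compl[OF closed_singleton, of x0]
    unfolding connected_def by blast
  \<comment> \<open>a second point of the sublevel set near \<open>x0\<close> is itself a relative minimum\<close>
  have "local_min_at f y"
    unfolding local_min_at_def
    using y V by (auto simp: L_def intro!: exI[of _ V] order_trans[OF _ V(3)])
  then show False using uniq y(3) by blast
qed

lemma lsc_fun_compact_gap:
  fixes f :: "'a::topological_space \<Rightarrow> ereal"
  assumes S: "compact S" and lsc: "lsc_fun f" and gt: "\<And>y. y \<in> S \<Longrightarrow> ereal c < f y"
  obtains \<eta> where "\<eta> > 0" "\<And>y. y \<in> S \<Longrightarrow> ereal (c + \<eta>) \<le> f y"
proof -
  define G where "G k = - {y. f y \<le> ereal (c + 1 / real (Suc k))}" for k :: nat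
  have "open (G k)" for k
    using lsc unfolding lsc_fun_def G_def by (simp add: open_Compl)
  moreover have "S \<subseteq> (\<Union>k. G k)"
  proof
    fix y assume "y \<in> S"
    then obtain r where r: "c < r" "ereal r < f y"
      using gt ereal_dense2 by (metis ereal_less_eq(3) less_ereal.simps(1) order_less_imp_le)
    obtain k where "inverse (real (Suc k)) < r - c"
      using reals_Archimedean r(1) by (metis diff_gt_0_iff_gt)
    then have "ereal (c + 1 / real (Suc k)) < f y"
      using r(2) by (simp add: inverse_eq_divide order.strict_trans[of _ "ereal r"])
    then show "y \<in> (\<Union>k. G k)" by (auto simp: G_def not_le)
  qed
  ultimately obtain K where K: "finite K" "S \<subseteq> (\<Union>k\<in>K. G k)"
    using compactE_image[OF S] by metis
  have G_mono: "G k \<subseteq> G m" if "k \<le> m" for k m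
  proof -
    have "ereal (c + 1 / real (Suc m)) \<le> ereal (c + 1 / real (Suc k))"
      using that by (simp add: frac_le)
    then show ?thesis by (auto simp: G_def intro: order_trans)
  qed
  have "G k \<subseteq> G (Max (insert 0 K))" if "k \<in> K" for k
    using K(1) that by (intro G_mono) simp
  with K(2) have "S \<subseteq> G (Max (insert 0 K))" by blast
  then show ?thesis
    by (intro that[of "1 / real (Suc (Max (insert 0 K)))"]) (auto simp: G_def)
qed

lemma locally_compact_space_open_compact_closure:
  fixes V :: "'a::metric_space set"
  assumes "locally_compact_space (euclidean :: 'a topology)" "open V" "x \<in> V"
  obtains W where "open W" "x \<in> W" "closure W \<subseteq> V" "compact (closure W)"
proof -
  have "neighbourhood_base_of (\<lambda>C. compactin euclidean C \<and> closedin euclidean C) (euclidean :: 'a topology)"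
    by (metis assms(1) Hausdorff_space_euclidean locally_compact_space_neighbourhood_base_closedin)
  then obtain W C where "open W" "compact C" "closed C" "x \<in> W" "W \<subseteq> C" "C \<subseteq> V"
    using assms(2,3) unfolding neighbourhood_base_of by (metis closed_closedin compactin_euclidean_iff open_openin)
  moreover have "closure W \<subseteq> C"
    by (rule closure_minimal) fact+
  ultimately show ?thesis
    using compact_Int_closed[of C "closure W"] by (intro that[of W]) (auto simp: Int_absorb1)
qed

lemma connected_sublevels_INF_gap:
  fixes p I :: "'a::topological_space \<Rightarrow> real"
  assumes sub: "\<And>t. connected {\<theta>. p \<theta> \<le> t}"
    and W: "\<theta>0 \<in> W" "W \<subseteq> U"
    and gap: "\<And>y. y \<in> frontier W \<Longrightarrow> I \<theta>0 + 3 * \<eta> \<le> I y"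
    and close: "\<And>y. y \<in> insert \<theta>0 (frontier W) \<Longrightarrow> \<bar>p y - I y\<bar> < \<eta>"
  shows "ereal \<eta> + (INF \<phi>\<in>U. ereal (p \<phi>)) < (INF \<theta>\<in>-U. ereal (p \<theta>))"
proof -
  have p0: "p \<theta>0 < I \<theta>0 + \<eta>" and "\<eta> > 0"
    using close[of \<theta>0] by auto
  have far: "I \<theta>0 + 2 * \<eta> \<le> p \<theta>" if "\<theta> \<notin> U" for \<theta>
  proof (rule ccontr)
    assume "\<not> ?thesis"
    define L where "L = {\<theta>'. p \<theta>' \<le> max (p \<theta>) (p \<theta>0)}"
    \<comment> \<open>this sublevel set joins \<open>\<theta>0 \<in> W\<close> to \<open>\<theta> \<notin> W\<close>, so it meets the frontier of \<open>W\<close>,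
      where \<open>p > I \<theta>0 + 2 * \<eta>\<close>\<close>
    have "\<theta>0 \<in> L" "\<theta> \<in> L" "connected L"
      by (auto simp: L_def sub)
    then have "L \<inter> frontier W \<noteq> {}"
      using W that by (intro connected_Int_frontier) blast+
    then obtain y where "y \<in> frontier W" "p y \<le> max (p \<theta>) (p \<theta>0)"
      by (auto simp: L_def)
    with gap[of y] close[of y] p0 \<open>\<not> ?thesis\<close> show False by auto
  qed
  have "ereal \<eta> + (INF \<phi>\<in>U. ereal (p \<phi>)) \<le> ereal \<eta> + ereal (p \<theta>0)"
    using W by (intro add_left_mono INF_lower) auto
  also have "\<dots> < ereal (I \<theta>0 + 2 * \<eta>)"
    using p0 by simp
  also have "\<dots> \<le> (INF \<theta>\<in>-U. ereal (p \<theta>))"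
    using far by (intro INF_greatest) auto
  finally show ?thesis .
qed

lemma uniminimal_at_separation:
  fixes f :: "'a::metric_space \<Rightarrow> ereal" and I :: "'a \<Rightarrow> real"
  assumes conn: "connected (UNIV :: 'a set)"
    and lc: "locally_compact_space (euclidean :: 'a topology)"
    and uni: "uniminimal_at f \<theta>0"
    and U0: "nbhd U0 \<theta>0" and fI: "\<And>\<theta>. \<theta> \<in> U0 \<Longrightarrow> f \<theta> = ereal (I \<theta>)"
    and U: "nbhd U \<theta>0"
  obtains \<eta> where "\<eta> > 0"
    "\<And>p. (\<And>t. connected {\<theta>. p \<theta> \<le> t}) \<Longrightarrow> (\<And>\<theta>. \<theta> \<in> U0 \<Longrightarrow> \<bar>p \<theta> - I \<theta>\<bar> < \<eta>) \<Longrightarrow>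
       ereal \<eta> + (INF \<phi>\<in>U. ereal (p \<phi>)) < (INF \<theta>\<in>-U. ereal (p \<theta>))"
proof -
  obtain V V0 where V: "open V" "\<theta>0 \<in> V" "V \<subseteq> U" and V0: "open V0" "\<theta>0 \<in> V0" "V0 \<subseteq> U0"
    using U U0 unfolding nbhd_def by blast
  then obtain W where W: "open W" "\<theta>0 \<in> W" "closure W \<subseteq> V \<inter> V0" "compact (closure W)"
    using locally_compact_space_open_compact_closure[OF lc, of "V \<inter> V0" \<theta>0] by blast
  have fr: "frontier W \<subseteq> U0" "compact (frontier W)"
    using W V0 compact_Int_closed[OF W(4) frontier_closed] by (auto simp: frontier_closures)
  have "ereal (I \<theta>0) < f y" if "y \<in> frontier W" for y
  proof -
    have "y \<noteq> \<theta>0"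
      using that W(1,2) frontier_disjoint_eq by blast
    then show ?thesis
      using uniminimal_at_imp_strict_min[OF conn uni] fI V0 by force
  qed
  then obtain \<eta>0 where \<eta>0: "\<eta>0 > 0" "\<And>y. y \<in> frontier W \<Longrightarrow> ereal (I \<theta>0 + \<eta>0) \<le> f y"
    using lsc_fun_compact_gap[OF fr(2)] uni unfolding uniminimal_at_def by metis
  have gap: "I \<theta>0 + 3 * (\<eta>0 / 3) \<le> I y" if "y \<in> frontier W" for y
    using \<eta>0(2)[OF that] fI[of y] fr(1) that by auto
  have "insert \<theta>0 (frontier W) \<subseteq> U0" "W \<subseteq> U"
    using fr(1) V V0 W closure_subset[of W] by auto
  show ?thesis
  proof (rule that)
    fix p :: "'a \<Rightarrow> real"
    assume sub: "\<And>t. connected {\<theta>. p \<theta> \<le> t}"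
      and close: "\<And>\<theta>. \<theta> \<in> U0 \<Longrightarrow> \<bar>p \<theta> - I \<theta>\<bar> < \<eta>0 / 3"
    show "ereal (\<eta>0 / 3) + (INF \<phi>\<in>U. ereal (p \<phi>)) < (INF \<theta>\<in>-U. ereal (p \<theta>))"
      using \<open>insert \<theta>0 (frontier W) \<subseteq> U0\<close>
      by (intro connected_sublevels_INF_gap[where I=I, OF sub W(2) \<open>W \<subseteq> U\<close> gap] close) auto
  qed (use \<eta>0(1) in simp)
qed

lemma outer_prob_tendsto_0:
  assumes "\<And>n. E n \<subseteq> B n" "\<And>n. B n \<in> sets (N n)" "(\<lambda>n. measure (N n) (B n)) \<longlonglongrightarrow> 0"
  shows "(\<lambda>n. outer_prob (N n) (E n)) \<longlonglongrightarrow> 0"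
proof (rule tendsto_sandwich[OF _ _ tendsto_const assms(3)])
  have "0 \<le> outer_prob (N n) (E n) \<and> outer_prob (N n) (E n) \<le> measure (N n) (B n)" for n
    using assms(1,2)[of n] unfolding outer_prob_def
    by (auto intro!: cInf_greatest cInf_lower bdd_belowI[of _ 0])
  then show "\<forall>\<^sub>F n in sequentially. 0 \<le> outer_prob (N n) (E n)"
    and "\<forall>\<^sub>F n in sequentially. outer_prob (N n) (E n) \<le> measure (N n) (B n)"
    by auto
qed

lemma AE_tendsto_0_imp_prob_ge_tendsto_0:
  fixes g :: "nat \<Rightarrow> 'c \<Rightarrow> ereal"
  assumes "prob_space N" and g: "\<And>n. g n \<in> borel_measurable N"
    and ae: "AE \<omega> in N. (\<lambda>n. g n \<omega>) \<longlonglongrightarrow> 0" and "\<eta> > 0"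
  shows "(\<lambda>n. measure N {\<omega> \<in> space N. ereal \<eta> \<le> g n \<omega>}) \<longlonglongrightarrow> 0"
proof -
  interpret prob_space N by fact
  define S where "S n = {\<omega> \<in> space N. ereal \<eta> \<le> g n \<omega>}" for n
  have S: "S n \<in> sets N" for n
    unfolding S_def using g[of n] by measurable
  have "AE \<omega> in N. (\<lambda>n. indicator (S n) \<omega> :: real) \<longlonglongrightarrow> 0"
    using ae
  proof eventually_elim
    case (elim \<omega>)
    then have "eventually (\<lambda>n. g n \<omega> < ereal \<eta>) sequentially"
      using \<open>\<eta> > 0\<close> by (simp add: order_tendstoD(2))
    then have "eventually (\<lambda>n. indicator (S n) \<omega> = (0::real)) sequentially"
      by eventually_elim (auto simp: S_def split: split_indicator)
    then show ?case by (rule tendsto_eventually)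
  qed
  then have "(\<lambda>n. integral\<^sup>L N (indicator (S n) :: 'c \<Rightarrow> real)) \<longlonglongrightarrow> integral\<^sup>L N (\<lambda>_. 0)"
    using S by (intro integral_dominated_convergence[where w="\<lambda>_. 1"]) auto
  then show ?thesis
    using S by (simp add: S_def[symmetric])
qed

lemma emp_cong:
  assumes "\<And>i. i < n \<Longrightarrow> x i = y i"
  shows "emp n x f = emp n y f"
  using assms unfolding emp_def by (auto intro!: sum.cong)

lemma measure_PiM_lessThan_cylinder:
  fixes G :: "(nat \<Rightarrow> 'b) \<Rightarrow> 'c"
  assumes M: "prob_space M"
    and G: "G \<in> measurable (PiM UNIV (\<lambda>_. M)) N" and B: "B \<in> sets N"
    and G_local: "\<And>\<omega> \<omega>'. (\<And>i. i < n \<Longrightarrow> \<omega> i = \<omega>' i) \<Longrightarrow> G \<omega> = G \<omega>'"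
  defines "E \<equiv> {x \<in> space (PiM {..<n} (\<lambda>_. M)). G x \<in> B}"
  shows "E \<in> sets (PiM {..<n} (\<lambda>_. M))"
    and "measure (PiM {..<n} (\<lambda>_. M)) E =
         measure (PiM UNIV (\<lambda>_. M)) {\<omega> \<in> space (PiM UNIV (\<lambda>_. M)). G \<omega> \<in> B}"
proof -
  interpret M: prob_space M by fact
  interpret product_prob_space "\<lambda>_::nat. M" UNIV by unfold_locales
  obtain c where c: "c \<in> space M"
    using M.not_empty by blast
  define ext where "ext x = (\<lambda>i. if i < n then x i else c)" for x :: "nat \<Rightarrow> 'b"
  have "(\<lambda>x. if i < n then x i else c) \<in> measurable (PiM {..<n} (\<lambda>_. M)) M" for i
    using c by (cases "i < n") simp_all
  then have "ext \<in> measurable (PiM {..<n} (\<lambda>_. M)) (PiM UNIV (\<lambda>_. M))"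
    unfolding ext_def using c by (intro measurable_PiM_single') (auto simp: space_PiM)
  then have "(\<lambda>x. G (ext x)) \<in> measurable (PiM {..<n} (\<lambda>_. M)) N"
    using G by (rule measurable_compose)
  moreover have "G (ext x) = G x" for x
    by (rule G_local) (simp add: ext_def)
  ultimately show E: "E \<in> sets (PiM {..<n} (\<lambda>_. M))"
    using measurable_sets[OF _ B, of "\<lambda>x. G (ext x)"] by (simp add: E_def vimage_def Int_def conj_commute)
  have "measure (PiM {..<n} (\<lambda>_. M)) E =
        measure (distr (PiM UNIV (\<lambda>_. M)) (PiM {..<n} (\<lambda>_. M)) (\<lambda>\<omega>. restrict \<omega> {..<n})) E"
    by (simp add: distr_PiM_restrict_finite)
  also have "\<dots> = measure (PiM UNIV (\<lambda>_. M))
      ((\<lambda>\<omega>. restrict \<omega> {..<n}) -` E \<inter> space (PiM UNIV (\<lambda>_. M)))"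
    using E by (intro measure_distr measurable_restrict_subset) auto
  also have "(\<lambda>\<omega>. restrict \<omega> {..<n}) -` E \<inter> space (PiM UNIV (\<lambda>_. M)) =
      {\<omega> \<in> space (PiM UNIV (\<lambda>_. M)). G \<omega> \<in> B}"
  proof -
    have "G (restrict \<omega> {..<n}) = G \<omega>" for \<omega>
      by (rule G_local) simp
    then show ?thesis by (auto simp: E_def space_PiM)
  qed
  finally show "measure (PiM {..<n} (\<lambda>_. M)) E =
      measure (PiM UNIV (\<lambda>_. M)) {\<omega> \<in> space (PiM UNIV (\<lambda>_. M)). G \<omega> \<in> B}" .
qed

lemma glivenko_cantelli_deviation_tendsto_0:
  assumes M: "prob_space M" and gc: "glivenko_cantelli M F" and "\<eta> > 0"
  defines "D n \<equiv> {x \<in> space (PiM {..<n} (\<lambda>_. M)).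
                    ereal \<eta> \<le> (SUP f\<in>F. ereal \<bar>emp n x f - integral\<^sup>L M f\<bar>)}"
  shows "D n \<in> sets (PiM {..<n} (\<lambda>_. M))"
    and "(\<lambda>n. measure (PiM {..<n} (\<lambda>_. M)) (D n)) \<longlonglongrightarrow> 0"
proof -
  define g where "g n \<omega> = (SUP f\<in>F. ereal \<bar>emp n \<omega> f - integral\<^sup>L M f\<bar>)" for n \<omega>
  have g: "\<And>n. g n \<in> borel_measurable (PiM UNIV (\<lambda>_. M))"
    and ae: "AE \<omega> in PiM UNIV (\<lambda>_. M). (\<lambda>n. g n \<omega>) \<longlonglongrightarrow> 0"
    using gc unfolding glivenko_cantelli_def g_def by auto
  have g_local: "g n \<omega> = g n \<omega>'" if "\<And>i. i < n \<Longrightarrow> \<omega> i = \<omega>' i" for n \<omega> \<omega>'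
    unfolding g_def using emp_cong[OF that] by simp
  note cylinder = measure_PiM_lessThan_cylinder[OF M g atLeast_borel g_local, of _ _ "ereal \<eta>"]
  show "D n \<in> sets (PiM {..<n} (\<lambda>_. M))" for n
    using cylinder(1) by (simp add: D_def g_def)
  show "(\<lambda>n. measure (PiM {..<n} (\<lambda>_. M)) (D n)) \<longlonglongrightarrow> 0"
    using AE_tendsto_0_imp_prob_ge_tendsto_0[OF prob_space_PiM[OF M] g ae \<open>\<eta> > 0\<close>] cylinder(2)
    by (simp add: D_def g_def)
qed

definition definite_M_limit :: "'b measure \<Rightarrow> ('b \<Rightarrow> 'a::topological_space \<Rightarrow> real) \<Rightarrow> 'a \<Rightarrow> bool" where
  "definite_M_limit M h \<theta>0 \<longleftrightarrow> (\<forall>U. nbhd U \<theta>0 \<longrightarrow> (\<exists>\<epsilon>>0.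
     (\<lambda>n. outer_prob (PiM {..<n} (\<lambda>_. M))
        {x \<in> space (PiM {..<n} (\<lambda>_. M)).
           (INF \<theta>\<in>- U. ereal (emp n x (\<lambda>y. h y \<theta>)))
             \<le> ereal \<epsilon> + (INF \<phi>\<in>U. ereal (emp n x (\<lambda>y. h y \<phi>)))}) \<longlonglongrightarrow> 0))"

definition M_functional :: "'b measure \<Rightarrow> ('b \<Rightarrow> 'a \<Rightarrow> real) \<Rightarrow> 'a \<Rightarrow> bool" where
  "M_functional M h \<theta>0 \<longleftrightarrow>
     (\<forall>\<theta>. int_defined M (\<lambda>x. h x \<theta>) \<and> eint M (\<lambda>x. h x \<theta>) > - \<infinity>) \<and>
     (\<forall>\<theta>. \<theta> \<noteq> \<theta>0 \<longrightarrow> eint M (\<lambda>x. h x \<theta>0) < eint M (\<lambda>x. h x \<theta>))"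

lemma definite_M_limitI:
  fixes M :: "'b measure" and h :: "'b \<Rightarrow> 'a::metric_space \<Rightarrow> real"
  assumes conn: "connected (UNIV :: 'a set)"
    and lc: "locally_compact_space (euclidean :: 'a topology)"
    and P: "prob_space M"
    and uni: "uniminimal_at (\<lambda>\<theta>. eint M (\<lambda>x. h x \<theta>)) \<theta>0"
    and A: "\<And>n. A n \<in> sets (PiM {..<n} (\<lambda>_. M))"
      "(\<lambda>n. measure (PiM {..<n} (\<lambda>_. M)) (A n)) \<longlonglongrightarrow> 0"
      "\<And>n x. x \<in> space (PiM {..<n} (\<lambda>_. M)) - A n \<Longrightarrow>
         uniminimal (\<lambda>\<theta>. ereal (emp n x (\<lambda>y. h y \<theta>)))"
    and U0: "nbhd U0 \<theta>0" and gc: "glivenko_cantelli M ((\<lambda>\<theta> x. h x \<theta>) ` U0)"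
  shows "definite_M_limit M h \<theta>0"
  unfolding definite_M_limit_def
proof (intro allI impI)
  fix U assume U: "nbhd U \<theta>0"
  define Q where "Q n = PiM {..<n} (\<lambda>_. M)" for n :: nat
  define I where "I \<theta> = integral\<^sup>L M (\<lambda>x. h x \<theta>)" for \<theta>
  have "eint M (\<lambda>x. h x \<theta>) = ereal (I \<theta>)" if "\<theta> \<in> U0" for \<theta>
    using gc that unfolding glivenko_cantelli_def I_def by (auto intro: eint_eq_lebesgue_integral)
  then obtain \<eta> where "\<eta> > 0" and separation:
    "\<And>p. (\<And>t. connected {\<theta>. p \<theta> \<le> t}) \<Longrightarrow> (\<And>\<theta>. \<theta> \<in> U0 \<Longrightarrow> \<bar>p \<theta> - I \<theta>\<bar> < \<eta>) \<Longrightarrow>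
       ereal \<eta> + (INF \<phi>\<in>U. ereal (p \<phi>)) < (INF \<theta>\<in>-U. ereal (p \<theta>))"
    using uniminimal_at_separation[OF conn lc uni U0 _ U] by blast
  define D where "D n = {x \<in> space (Q n).
    ereal \<eta> \<le> (SUP f\<in>(\<lambda>\<theta> x. h x \<theta>) ` U0. ereal \<bar>emp n x f - integral\<^sup>L M f\<bar>)}" for n
  have D: "\<And>n. D n \<in> sets (Q n)" "(\<lambda>n. measure (Q n) (D n)) \<longlonglongrightarrow> 0"
    using glivenko_cantelli_deviation_tendsto_0[OF P gc \<open>\<eta> > 0\<close>] unfolding D_def Q_def by auto
  define E where "E n = {x \<in> space (Q n).
    (INF \<theta>\<in>- U. ereal (emp n x (\<lambda>y. h y \<theta>))) \<le> ereal \<eta> + (INF \<phi>\<in>U. ereal (emp n x (\<lambda>y. h y \<phi>)))}"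
    for n
  have gap: "ereal \<eta> + (INF \<phi>\<in>U. ereal (emp n x (\<lambda>y. h y \<phi>)))
      < (INF \<theta>\<in>-U. ereal (emp n x (\<lambda>y. h y \<theta>)))" if "x \<in> space (Q n) - (A n \<union> D n)" for n x
  proof (rule separation)
    show "connected {\<theta>. emp n x (\<lambda>y. h y \<theta>) \<le> t}" for t
      using that A(3)[of x n] by (auto simp: Q_def uniminimal_def uniminimal_at_def)
    have "(SUP f\<in>(\<lambda>\<theta> x. h x \<theta>) ` U0. ereal \<bar>emp n x f - integral\<^sup>L M f\<bar>) < ereal \<eta>"
      using that by (simp add: D_def not_le)
    from SUP_lessD[OF this] show "\<bar>emp n x (\<lambda>y. h y \<theta>) - I \<theta>\<bar> < \<eta>" if "\<theta> \<in> U0" for \<theta>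
      using that by (simp add: I_def)
  qed
  then have "E n \<subseteq> A n \<union> D n" for n
    by (auto simp: E_def not_le[symmetric])
  moreover have "(\<lambda>n. measure (Q n) (A n \<union> D n)) \<longlonglongrightarrow> 0"
    by (rule tendsto_sandwich[OF _ _ tendsto_const tendsto_add_zero[OF A(2) D(2)]])
      (auto simp: Q_def intro!: always_eventually measure_Un_le A(1) D(1)[unfolded Q_def])
  ultimately have "(\<lambda>n. outer_prob (Q n) (E n)) \<longlonglongrightarrow> 0"
    using A(1) D(1) by (intro outer_prob_tendsto_0) (auto simp: Q_def)
  with \<open>\<eta> > 0\<close> show "\<exists>\<epsilon>>0. (\<lambda>n. outer_prob (PiM {..<n} (\<lambda>_. M))
        {x \<in> space (PiM {..<n} (\<lambda>_. M)).
           (INF \<theta>\<in>- U. ereal (emp n x (\<lambda>y. h y \<theta>)))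
             \<le> ereal \<epsilon> + (INF \<phi>\<in>U. ereal (emp n x (\<lambda>y. h y \<phi>)))}) \<longlonglongrightarrow> 0"
    unfolding E_def Q_def by blast
qed

theorem theorem2:
  fixes M :: "'b measure" and h :: "'b \<Rightarrow> 'a::metric_space \<Rightarrow> real" and \<theta>0 :: 'a
  assumes conn: "connected (UNIV :: 'a set)"
    and lc: "locally_compact_space (euclidean :: 'a topology)"
    and P: "prob_space M"
    and meas: "\<And>\<theta>. (\<lambda>x. h x \<theta>) \<in> borel_measurable M"
    and i_def: "\<And>\<theta>. int_defined M (\<lambda>x. h x \<theta>)"
    and i_uni: "uniminimal_at (\<lambda>\<theta>. eint M (\<lambda>x. h x \<theta>)) \<theta>0"
    and ii: "\<exists>A. (\<forall>n. A n \<in> sets (PiM {..<n} (\<lambda>_. M))) \<and>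
               (\<lambda>n. measure (PiM {..<n} (\<lambda>_. M)) (A n)) \<longlonglongrightarrow> 0 \<and>
               (\<forall>n x. x \<in> space (PiM {..<n} (\<lambda>_. M)) - A n \<longrightarrow>
                      uniminimal (\<lambda>\<theta>. ereal (emp n x (\<lambda>y. h y \<theta>))))"
    and iii: "\<exists>U. nbhd U \<theta>0 \<and> glivenko_cantelli M ((\<lambda>\<theta>. (\<lambda>x. h x \<theta>)) ` U)"
  shows "(\<forall>U. nbhd U \<theta>0 \<longrightarrow> (\<exists>\<epsilon>>0.
            (\<lambda>n. outer_prob (PiM {..<n} (\<lambda>_. M))
               {x \<in> space (PiM {..<n} (\<lambda>_. M)).
                  (INF \<theta>\<in>- U. ereal (emp n x (\<lambda>y. h y \<theta>)))
                    \<le> ereal \<epsilon> + (INF \<phi>\<in>U. ereal (emp n x (\<lambda>y. h y \<phi>)))}) \<longlonglongrightarrow> 0))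
       \<and> (\<forall>\<theta>. int_defined M (\<lambda>x. h x \<theta>) \<and> eint M (\<lambda>x. h x \<theta>) > - \<infinity>)
       \<and> (\<forall>\<theta>. \<theta> \<noteq> \<theta>0 \<longrightarrow> eint M (\<lambda>x. h x \<theta>0) < eint M (\<lambda>x. h x \<theta>))"
proof -
  obtain A where "\<And>n. A n \<in> sets (PiM {..<n} (\<lambda>_. M))"
    "(\<lambda>n. measure (PiM {..<n} (\<lambda>_. M)) (A n)) \<longlonglongrightarrow> 0"
    "\<And>n x. x \<in> space (PiM {..<n} (\<lambda>_. M)) - A n \<Longrightarrow>
       uniminimal (\<lambda>\<theta>. ereal (emp n x (\<lambda>y. h y \<theta>)))"
    using ii by blast
  moreover obtain U0 where "nbhd U0 \<theta>0" "glivenko_cantelli M ((\<lambda>\<theta> x. h x \<theta>) ` U0)"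
    using iii by blast
  ultimately have "definite_M_limit M h \<theta>0"
    by (rule definite_M_limitI[OF conn lc P i_uni])
  moreover have "M_functional M h \<theta>0"
    unfolding M_functional_def
    using i_def eint_gt_MInf uniminimal_at_imp_strict_min[OF conn i_uni] by blast
  ultimately show ?thesis
    unfolding definite_M_limit_def M_functional_def by blast
qed

end
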